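(* Let $Q\ge0$, $R>0$, $M\ge0$ be symmetric matrices, $f:\mathbb{R}^n\times\mathbb{R}^m\to\mathbb{R}^n$ smooth, and consider an $s$-stage Runge–Kutta method with coefficients $a_{ij}$, $b_i>0$, step $h>0$ small enough that the constraints $x_{k+1}=x_k+h\sum_{i=1}^s b_if(x_{ki},u_{ki})$, $x_0=a$, $x_{ki}=x_k+h\sum_{j=1}^s a_{ij}f(x_{kj},u_{kj})$ ($0\le k\le N-1$, $1\le i\le s$) determine the vector of internal-stage states $X=(x_{01},\dots,x_{0s},\dots,x_{N-1,1},\dots,x_{N-1,s})$ and the node states $x_k$ as smooth functions $X=F(U)$, $x_k=F_d^k(U)$ of the vector of internal-stage controls $U=(u_{01},\dots,u_{0s},\dots,u_{N-1,s})$. Let $$J_d(U)=\tfrac12 F(U)^T\mathcal{Q}F(U)+\tfrac12U^T\mathcal{R}U+\tfrac12F_d^N(U)^TMF_d^N(U),$$ where $\mathcal{Q}$ (resp. $\mathcal{R}$) is the block-diagonal matrix whose diagonal blocks are, for each $k=0,\dots,N-1$ and $i=1,\dots,s$ in order, $hb_iQ$ (resp. $hb_iR$). Fix $U^0$, set $X^0=F(U^0)$, $x_N^0=F_d^N(U^0)$, and let $\tilde U$ be a minimizer of $\tfrac12X^T\mathcal{Q}X+\tfrac12U^T\mathcal{R}U+\tfrac12x_N^TMx_N$ over the tangent plane $X-X^0=F'(U^0)(U-U^0)$, $x_N-x_N^0=(F_d^N)'(U^0)(U-U^0)$ (the ILQR step). Then, with $$W(U^0)=F'(U^0)^T\mathcal{Q}F'(U^0)+\mathcal{R}+(F_d^N)'(U^0)^TM(F_d^N)'(U^0),$$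 the matrix $W(U^0)$ is symmetric positive definite, $\tilde U$ is unique, and $$\tilde U-U^0=-W(U^0)^{-1}J_d'(U^0);$$ in particular $\tilde U-U^0$ is a descent direction for $J_d$ at $U^0$ (i.e. $J_d'(U^0)^T(\tilde U-U^0)<0$ whenever $J_d'(U^0)\neq0$).
   Context: $J_d$ is the cost of the optimization problem obtained by discretizing, with the given Runge–Kutta method, the problem of minimizing $\int_0^{t_f}(\tfrac12x^TQx+\tfrac12u^TRu)dt+\tfrac12x(t_f)^TMx(t_f)$ subject to $\dot x=f(x,u)$, $x(0)=a$, with $h=t_f/N$. $J_d'$ denotes the gradient of $J_d$ with respect to $U$, and $F'$, $(F_d^N)'$ the Jacobians. *)

theory Defs
  imports "HOL-Analysis.Analysis"
begin

text \<open>Steps are indexed by a finite linearly ordered type 'k (N = CARD('k)),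
  stages by a finite type 's (s = CARD('s)).  A vector of internal-stage
  controls U = (u_{ki}) is an element of real^'m^'s^'k (U $ k $ i = u_{ki}),
  likewise the internal-stage states X :: real^'n^'s^'k.  Node states are
  x_0, ..., x_N indexed by nat; step number j < N is the j-th element of 'k.\<close>

definition step_idx :: "nat \<Rightarrow> 'k::{finite,linorder}" where
  "step_idx j = sorted_list_of_set (UNIV :: 'k set) ! j"

definition rk_constraints ::
  "(real^'n \<Rightarrow> real^'m \<Rightarrow> real^'n) \<Rightarrow> real^'s^'s \<Rightarrow> real^'s \<Rightarrow> real \<Rightarrow> real^'n
   \<Rightarrow> (((real,'m) vec,'s) vec,'k::{finite,linorder}) vec \<Rightarrow> (((real,'n) vec,'s) vec,'k) vec \<Rightarrow> (nat \<Rightarrow> real^'n) \<Rightarrow> bool" where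
  "rk_constraints f A b h a U X xs \<longleftrightarrow>
     xs 0 = a \<and>
     (\<forall>j < CARD('k).
        xs (Suc j) = xs j + h *\<^sub>R (\<Sum>i\<in>UNIV. (b $ i) *\<^sub>R
                       f (X $ step_idx j $ i) (U $ step_idx j $ i))) \<and>
     (\<forall>j < CARD('k). \<forall>i.
        X $ step_idx j $ i = xs j + h *\<^sub>R (\<Sum>l\<in>UNIV. (A $ i $ l) *\<^sub>R
                       f (X $ step_idx j $ l) (U $ step_idx j $ l)))"

definition block_op :: "real \<Rightarrow> real^'s \<Rightarrow> real^'d^'d \<Rightarrow> real^'d^'s^'k \<Rightarrow> real^'d^'s^'k" where
  "block_op h b P Y = (\<chi> k i. (h * b $ i) *\<^sub>R (P *v (Y $ k $ i)))"

definition sym_psd :: "real^'d^'d \<Rightarrow> bool" where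
  "sym_psd P \<longleftrightarrow> transpose P = P \<and> (\<forall>x. 0 \<le> x \<bullet> (P *v x))"

definition sym_pd :: "real^'d^'d \<Rightarrow> bool" where
  "sym_pd P \<longleftrightarrow> transpose P = P \<and> (\<forall>x. x \<noteq> 0 \<longrightarrow> 0 < x \<bullet> (P *v x))"

definition sym_pd_op :: "('a::euclidean_space \<Rightarrow> 'a) \<Rightarrow> bool" where
  "sym_pd_op W \<longleftrightarrow> linear W \<and> (\<forall>x y. W x \<bullet> y = x \<bullet> W y) \<and> (\<forall>x. x \<noteq> 0 \<longrightarrow> 0 < x \<bullet> W x)"

end

theory Submission
  imports Defs
begin

text \<open>Replacing F and F_d^N by their linearizations at U0 turns the ILQR subproblem, written in
  w = U - U0, into the exact minimization of the quadratic
  J_d(U0) + J_d'(U0) \<bullet> w + (1/2) w \<bullet> W(U0) w, because the linear term of the linearized cost is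
  precisely the gradient of J_d at U0 (chain rule).  W(U0) is symmetric positive definite since R
  is positive definite and the other two terms are positive semidefinite.  A minimizer of a
  quadratic with such a Hessian is the unique solution of W w = -J_d'(U0), and then
  J_d'(U0) \<bullet> w = - w \<bullet> W w < 0.\<close>

lemma sym_pd_op_inj:
  assumes "sym_pd_op W"
  shows "inj W"
proof -
  have "linear W" using assms by (simp add: sym_pd_op_def)
  moreover have "x = 0" if "W x = 0" for x
    using assms that by (auto simp: sym_pd_op_def)
  ultimately show ?thesis by (simp add: linear_injective_0)
qed

lemma sym_pd_op_minimizer_eq:
  fixes W :: "'a::euclidean_space \<Rightarrow> 'a"
  assumes W: "sym_pd_op W"
    and min: "\<And>v. g \<bullet> w + (w \<bullet> W w) / 2 \<le> g \<bullet> v + (v \<bullet> W v) / 2"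
  shows "W w = - g"
proof -
  have lin: "linear W" and sym: "\<And>x y. W x \<bullet> y = x \<bullet> W y"
    using W by (auto simp: sym_pd_op_def)
  define G where "G = g + W w"
  have expand: "g \<bullet> (w + d) + ((w + d) \<bullet> W (w + d)) / 2
      = g \<bullet> w + (w \<bullet> W w) / 2 + G \<bullet> d + (d \<bullet> W d) / 2" for d
    using sym[of w d]
    by (simp add: G_def linear_add[OF lin] inner_add_left inner_add_right inner_commute[of d "W w"]
        field_simps)
  have "G = 0"
  proof (rule ccontr)
    assume "G \<noteq> 0"
    define a where "a = G \<bullet> G"
    define c where "c = G \<bullet> W G"
    have "0 < a" "0 < c"
      using \<open>G \<noteq> 0\<close> W by (auto simp: a_def c_def sym_pd_op_def)
    \<comment> \<open>Moving from w by -s G with s = a / c lowers the quadratic by a * a / (2 c) > 0.\<close>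
    define s where "s = a / c"
    have "g \<bullet> w + (w \<bullet> W w) / 2 \<le> g \<bullet> w + (w \<bullet> W w) / 2 - s * a + s * s * c / 2"
      using min[of "w + (- s) *\<^sub>R G"]
      unfolding expand by (simp add: linear_scale[OF lin] linear_neg[OF lin] a_def c_def)
    also have "\<dots> = g \<bullet> w + (w \<bullet> W w) / 2 - a * a / (2 * c)"
      using \<open>0 < c\<close> by (simp add: s_def field_simps)
    finally have "a * a \<le> 0"
      using \<open>0 < c\<close> by (simp add: field_simps)
    then show False
      using \<open>0 < a\<close> by (simp add: mult_le_0_iff)
  qed
  then show ?thesis by (simp add: G_def eq_neg_iff_add_eq_0 add.commute)
qed

lemma sym_pd_op_descent:
  assumes "sym_pd_op W" and "W d = - g" and "g \<noteq> 0"
  shows "g \<bullet> d < 0"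
proof -
  have "d \<noteq> 0"
    using assms by (auto simp: sym_pd_op_def linear_0)
  then have "0 < d \<bullet> W d"
    using assms(1) by (simp add: sym_pd_op_def)
  then show ?thesis
    using assms(2) by (simp add: inner_commute)
qed

lemma has_derivative_quadratic_form:
  fixes P :: "'b::real_inner \<Rightarrow> 'b"
  assumes f: "(f has_derivative f') (at x)" and P: "bounded_linear P"
    and P_sym: "\<And>u v. P u \<bullet> v = u \<bullet> P v"
  shows "((\<lambda>y. f y \<bullet> P (f y)) has_derivative (\<lambda>v. 2 * (f' v \<bullet> P (f x)))) (at x)"
proof -
  have "((\<lambda>y. f y \<bullet> P (f y)) has_derivative (\<lambda>v. f x \<bullet> P (f' v) + f' v \<bullet> P (f x))) (at x)"
    by (rule has_derivative_inner[OF f bounded_linear.has_derivative[OF P f]])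
  moreover have "f x \<bullet> P (f' v) = f' v \<bullet> P (f x)" for v
    by (metis P_sym inner_commute)
  ultimately show ?thesis by simp
qed

lemma matrix_vector_mult_self_adjoint:
  fixes P :: "real^'d^'d"
  assumes "transpose P = P"
  shows "(P *v x) \<bullet> y = x \<bullet> (P *v y)"
  by (metis assms dot_lmul_matrix vector_transpose_matrix)

lemma inner_block_op:
  "Y \<bullet> block_op h b P Z = (\<Sum>k\<in>UNIV. \<Sum>i\<in>UNIV. (h * b $ i) * (Y $ k $ i \<bullet> (P *v Z $ k $ i)))"
  by (simp add: block_op_def inner_vec_def algebra_simps sum_distrib_left)

lemma linear_block_op: "linear (block_op h b P)"
  by (rule linearI)
    (simp_all add: block_op_def vec_eq_iff matrix_vector_right_distrib scaleR_right_distrib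
      matrix_vector_mult_scaleR)

lemma block_op_self_adjoint:
  assumes "transpose P = P"
  shows "block_op h b P Y \<bullet> Z = Y \<bullet> block_op h b P Z"
proof -
  have "Z $ k $ i \<bullet> (P *v Y $ k $ i) = Y $ k $ i \<bullet> (P *v Z $ k $ i)" for k i
    by (metis assms matrix_vector_mult_self_adjoint inner_commute)
  then show ?thesis
    by (simp add: inner_commute[of "block_op h b P Y"] inner_block_op)
qed

lemma block_op_nonneg:
  assumes "sym_psd P" "\<forall>i. 0 < b $ i" "0 < h"
  shows "0 \<le> Y \<bullet> block_op h b P Y"
  using assms unfolding inner_block_op sym_psd_def
  by (intro sum_nonneg mult_nonneg_nonneg) (auto simp: less_imp_le)

lemma block_op_pos:
  assumes P: "sym_pd P" and b: "\<forall>i. 0 < b $ i" and h: "0 < h" and "Y \<noteq> 0"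
  shows "0 < Y \<bullet> block_op h b P Y"
proof -
  have P_nonneg: "0 \<le> v \<bullet> (P *v v)" for v
    using P by (cases "v = 0") (auto simp: sym_pd_def less_imp_le)
  have terms_nonneg: "0 \<le> (h * b $ i) * (Y $ k $ i \<bullet> (P *v Y $ k $ i))" for k i
    using b h P_nonneg by (simp add: less_imp_le)
  obtain k i where "Y $ k $ i \<noteq> 0"
    using \<open>Y \<noteq> 0\<close> by (metis vec_eq_iff zero_index)
  then have "0 < (h * b $ i) * (Y $ k $ i \<bullet> (P *v Y $ k $ i))"
    using P b h by (simp add: sym_pd_def)
  then have "0 < (\<Sum>i\<in>UNIV. (h * b $ i) * (Y $ k $ i \<bullet> (P *v Y $ k $ i)))"
    using terms_nonneg by (intro sum_pos2[where i = i]) auto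
  then show ?thesis
    unfolding inner_block_op using terms_nonneg
    by (intro sum_pos2[where i = k] sum_nonneg) auto
qed

text \<open>L and Lf stand for F'(U0) and (F_d^N)'(U0); Q and R for the block-diagonal
  weights (calligraphic Q and R of the paper).\<close>

locale lq_cost =
  fixes L :: "'u::euclidean_space \<Rightarrow> 'x::euclidean_space" and Lf :: "'u \<Rightarrow> 'y::euclidean_space"
    and Q :: "'x \<Rightarrow> 'x" and R :: "'u \<Rightarrow> 'u" and M :: "'y \<Rightarrow> 'y"
  assumes linear_L: "linear L" and linear_Lf: "linear Lf"
    and linear_Q: "linear Q" and linear_R: "linear R" and linear_M: "linear M"
    and Q_self_adjoint: "\<And>x y. Q x \<bullet> y = x \<bullet> Q y"
    and R_self_adjoint: "\<And>x y. R x \<bullet> y = x \<bullet> R y"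
    and M_self_adjoint: "\<And>x y. M x \<bullet> y = x \<bullet> M y"
    and Q_nonneg: "\<And>x. 0 \<le> x \<bullet> Q x" and M_nonneg: "\<And>x. 0 \<le> x \<bullet> M x"
    and R_pos: "\<And>x. x \<noteq> 0 \<Longrightarrow> 0 < x \<bullet> R x"
begin

definition cost :: "'x \<Rightarrow> 'u \<Rightarrow> 'y \<Rightarrow> real" where
  "cost X U x = (1/2) * (X \<bullet> Q X) + (1/2) * (U \<bullet> R U) + (1/2) * (x \<bullet> M x)"

definition gradient :: "'x \<Rightarrow> 'u \<Rightarrow> 'y \<Rightarrow> 'u" where
  "gradient X U x = adjoint L (Q X) + R U + adjoint Lf (M x)"

definition hessian :: "'u \<Rightarrow> 'u" where
  "hessian V = adjoint L (Q (L V)) + R V + adjoint Lf (M (Lf V))"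

definition tangent_minimizer :: "'x \<Rightarrow> 'u \<Rightarrow> 'y \<Rightarrow> 'u \<Rightarrow> bool" where
  "tangent_minimizer X0 U0 x0 U1 \<longleftrightarrow>
    (\<exists>X x. X - X0 = L (U1 - U0) \<and> x - x0 = Lf (U1 - U0) \<and>
      (\<forall>U' X' x'. X' - X0 = L (U' - U0) \<and> x' - x0 = Lf (U' - U0) \<longrightarrow>
        cost X U1 x \<le> cost X' U' x'))"

lemma inner_hessian: "V \<bullet> hessian Z = L V \<bullet> Q (L Z) + V \<bullet> R Z + Lf V \<bullet> M (Lf Z)"
  by (simp add: hessian_def inner_add_right adjoint_clauses(1)[OF linear_L]
      adjoint_clauses(1)[OF linear_Lf])

lemma sym_pd_op_hessian: "sym_pd_op hessian"
  unfolding sym_pd_op_def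
proof (intro conjI allI impI)
  show "linear hessian"
    unfolding hessian_def
    by (intro linear_compose_add linear_R
        linear_compose[unfolded o_def, OF linear_compose[unfolded o_def, OF linear_L linear_Q]
          adjoint_linear[OF linear_L]]
        linear_compose[unfolded o_def, OF linear_compose[unfolded o_def, OF linear_Lf linear_M]
          adjoint_linear[OF linear_Lf]])
  show "hessian x \<bullet> y = x \<bullet> hessian y" for x y
  proof -
    have "L y \<bullet> Q (L x) = L x \<bullet> Q (L y)" "y \<bullet> R x = x \<bullet> R y" "Lf y \<bullet> M (Lf x) = Lf x \<bullet> M (Lf y)"
      by (metis Q_self_adjoint R_self_adjoint M_self_adjoint inner_commute)+
    then show ?thesis
      by (simp add: inner_commute[of "hessian x"] inner_hessian)
  qed
  show "0 < x \<bullet> hessian x" if "x \<noteq> 0" for x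
    using R_pos[OF that] Q_nonneg[of "L x"] M_nonneg[of "Lf x"] by (simp add: inner_hessian)
qed

lemma cost_expansion:
  "cost (X + L w) (U + w) (x + Lf w)
     = cost X U x + gradient X U x \<bullet> w + (w \<bullet> hessian w) / 2"
proof -
  have "adjoint L (Q X) \<bullet> w = X \<bullet> Q (L w)" "adjoint Lf (M x) \<bullet> w = x \<bullet> M (Lf w)"
      "R U \<bullet> w = U \<bullet> R w" "w \<bullet> R U = U \<bullet> R w" "L w \<bullet> Q X = X \<bullet> Q (L w)" "Lf w \<bullet> M x = x \<bullet> M (Lf w)"
    by (metis adjoint_clauses(2)[OF linear_L] adjoint_clauses(2)[OF linear_Lf]
        Q_self_adjoint R_self_adjoint M_self_adjoint inner_commute)+
  then show ?thesis
    by (simp add: cost_def gradient_def inner_hessian linear_add[OF linear_Q]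
        linear_add[OF linear_R] linear_add[OF linear_M] inner_add_left inner_add_right field_simps)
qed

lemma tangent_minimizer_hessian_eq:
  assumes "tangent_minimizer X0 U0 x0 U1"
  shows "hessian (U1 - U0) = - gradient X0 U0 x0"
proof (rule sym_pd_op_minimizer_eq[OF sym_pd_op_hessian])
  let ?q = "\<lambda>w. gradient X0 U0 x0 \<bullet> w + (w \<bullet> hessian w) / 2"
  obtain X x where X: "X = X0 + L (U1 - U0)" and x: "x = x0 + Lf (U1 - U0)"
    and min: "\<And>U' X' x'. X' - X0 = L (U' - U0) \<Longrightarrow> x' - x0 = Lf (U' - U0) \<Longrightarrow>
                cost X U1 x \<le> cost X' U' x'"
    using assms unfolding tangent_minimizer_def by (metis add.commute diff_add_cancel)
  fix v
  have "cost X0 U0 x0 + ?q (U1 - U0) = cost X U1 x"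
    using cost_expansion[of X0 "U1 - U0" U0 x0] by (simp add: X x)
  also have "\<dots> \<le> cost (X0 + L v) (U0 + v) (x0 + Lf v)"
    by (rule min) simp_all
  also have "\<dots> = cost X0 U0 x0 + ?q v"
    by (simp add: cost_expansion)
  finally show "?q (U1 - U0) \<le> ?q v" by simp
qed

lemma has_gradient_cost:
  assumes F: "(F has_derivative L) (at U0)" and Fn: "(Fn has_derivative Lf) (at U0)"
  shows "GDERIV (\<lambda>U. cost (F U) U (Fn U)) U0 :> gradient (F U0) U0 (Fn U0)"
proof -
  have bl: "bounded_linear Q" "bounded_linear R" "bounded_linear M"
    using linear_Q linear_R linear_M by (simp_all add: linear_conv_bounded_linear)
  have "((\<lambda>U. cost (F U) U (Fn U)) has_derivative
      (\<lambda>v. (1/2) * (2 * (L v \<bullet> Q (F U0))) + (1/2) * (2 * (v \<bullet> R U0))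
         + (1/2) * (2 * (Lf v \<bullet> M (Fn U0))))) (at U0)"
    unfolding cost_def
    by (intro has_derivative_add has_derivative_mult_right has_derivative_quadratic_form
        F Fn has_derivative_ident bl Q_self_adjoint R_self_adjoint M_self_adjoint)
  then show ?thesis
    by (simp add: gderiv_def gradient_def inner_add_right adjoint_clauses(1)[OF linear_L]
        adjoint_clauses(1)[OF linear_Lf])
qed

end

lemma lq_cost_block_op:
  fixes Q :: "real^'n^'n" and R :: "real^'m^'m" and M :: "real^'n^'n"
  assumes "linear DF" "linear DFN" and Q: "sym_psd Q" and R: "sym_pd R" and M: "sym_psd M"
    and b: "\<forall>i. 0 < b $ i" and h: "0 < h"
  shows "lq_cost DF DFN (block_op h b Q) (block_op h b R) (\<lambda>x. M *v x)"
  unfolding lq_cost_def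
proof (intro conjI allI impI)
  show "linear DF" "linear DFN" by fact+
  show "linear (block_op h b Q)" "linear (block_op h b R)" "linear ((*v) M)"
    by (simp_all add: linear_block_op matrix_vector_mul_linear)
  show "block_op h b Q X \<bullet> Y = X \<bullet> block_op h b Q Y" for X Y
    using Q by (simp add: sym_psd_def block_op_self_adjoint)
  show "block_op h b R U \<bullet> V = U \<bullet> block_op h b R V" for U V
    using R by (simp add: sym_pd_def block_op_self_adjoint)
  show "(M *v x) \<bullet> y = x \<bullet> (M *v y)" for x y
    using M by (simp add: sym_psd_def matrix_vector_mult_self_adjoint)
  show "0 \<le> X \<bullet> block_op h b Q X" for X
    using block_op_nonneg[OF Q b h] .
  show "0 \<le> x \<bullet> (M *v x)" for x
    using M by (simp add: sym_psd_def)
  show "0 < x \<bullet> block_op h b R x" if "x \<noteq> 0" for x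
    using block_op_pos[OF R b h that] .
qed

theorem mainTheorem5:
  fixes Q :: "real^'n^'n" and R :: "real^'m^'m" and M :: "real^'n^'n"
    and f :: "real^'n \<Rightarrow> real^'m \<Rightarrow> real^'n"
    and A :: "real^'s^'s" and b :: "real^'s" and h :: real and a :: "real^'n"
    and F :: "(((real,'m) vec,'s) vec,'k::{finite,linorder}) vec \<Rightarrow> (((real,'n) vec,'s) vec,'k) vec"
    and Fd :: "nat \<Rightarrow> (((real,'m) vec,'s) vec,'k) vec \<Rightarrow> real^'n"
    and U0 Ut :: "(((real,'m) vec,'s) vec,'k) vec"
    and DF :: "(((real,'m) vec,'s) vec,'k) vec \<Rightarrow> (((real,'n) vec,'s) vec,'k) vec"
    and DFN :: "(((real,'m) vec,'s) vec,'k) vec \<Rightarrow> real^'n"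
  assumes Q: "sym_psd Q" and R: "sym_pd R" and M: "sym_psd M"
    and f_smooth: "\<forall>z. (\<lambda>p. f (fst p) (snd p)) differentiable (at z)"
    and b_pos: "\<forall>i. 0 < b $ i" and h_pos: "0 < h"
    and determ: "\<forall>U X xs. rk_constraints f A b h a U X xs \<longleftrightarrow>
                   (X = F U \<and> (\<forall>k \<le> CARD('k). xs k = Fd k U))"
    and F_smooth: "\<forall>U. F differentiable (at U)"
    and Fd_smooth: "\<forall>k \<le> CARD('k). \<forall>U. Fd k differentiable (at U)"
    and DF: "(F has_derivative DF) (at U0)"
    and DFN: "(Fd CARD('k) has_derivative DFN) (at U0)"
    and Ut_min: "\<exists>X x. X - F U0 = DF (Ut - U0) \<and> x - Fd CARD('k) U0 = DFN (Ut - U0) \<and>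
         (\<forall>U' X' x'. X' - F U0 = DF (U' - U0) \<and> x' - Fd CARD('k) U0 = DFN (U' - U0) \<longrightarrow>
            (1/2) * (X \<bullet> block_op h b Q X) + (1/2) * (Ut \<bullet> block_op h b R Ut) + (1/2) * (x \<bullet> (M *v x))
            \<le> (1/2) * (X' \<bullet> block_op h b Q X') + (1/2) * (U' \<bullet> block_op h b R U') + (1/2) * (x' \<bullet> (M *v x')))"
  defines "Jd \<equiv> \<lambda>U. (1/2) * (F U \<bullet> block_op h b Q (F U)) + (1/2) * (U \<bullet> block_op h b R U)
                 + (1/2) * (Fd CARD('k) U \<bullet> (M *v Fd CARD('k) U))"
    and "W \<equiv> \<lambda>V. adjoint DF (block_op h b Q (DF V)) + block_op h b R V + adjoint DFN (M *v DFN V)"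
  shows "sym_pd_op W
    \<and> (\<forall>U1. (\<exists>X x. X - F U0 = DF (U1 - U0) \<and> x - Fd CARD('k) U0 = DFN (U1 - U0) \<and>
         (\<forall>U' X' x'. X' - F U0 = DF (U' - U0) \<and> x' - Fd CARD('k) U0 = DFN (U' - U0) \<longrightarrow>
            (1/2) * (X \<bullet> block_op h b Q X) + (1/2) * (U1 \<bullet> block_op h b R U1) + (1/2) * (x \<bullet> (M *v x))
            \<le> (1/2) * (X' \<bullet> block_op h b Q X') + (1/2) * (U' \<bullet> block_op h b R U') + (1/2) * (x' \<bullet> (M *v x'))))
         \<longrightarrow> U1 = Ut)
    \<and> (\<exists>g. GDERIV Jd U0 :> g \<and> Ut - U0 = - inv W g \<and> (g \<noteq> 0 \<longrightarrow> g \<bullet> (Ut - U0) < 0))"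
proof -
  \<comment> \<open>Only the derivatives at U0 matter; the Runge-Kutta hypotheses merely specify F and Fd.\<close>
  interpret lq: lq_cost DF DFN "block_op h b Q" "block_op h b R" "\<lambda>x. M *v x"
    using lq_cost_block_op has_derivative_linear[OF DF] has_derivative_linear[OF DFN]
      Q R M b_pos h_pos by blast
  have W: "W = lq.hessian" and Jd: "Jd = (\<lambda>U. lq.cost (F U) U (Fd CARD('k) U))"
    by (simp_all add: W_def Jd_def lq.hessian_def lq.cost_def fun_eq_iff)
  let ?g = "lq.gradient (F U0) U0 (Fd CARD('k) U0)"
  have Ut_tangent_min: "lq.tangent_minimizer (F U0) U0 (Fd CARD('k) U0) Ut"
    using Ut_min unfolding lq.cost_def[symmetric] lq.tangent_minimizer_def[symmetric] .
  have hessian_step: "W (U1 - U0) = - ?g"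
    if "lq.tangent_minimizer (F U0) U0 (Fd CARD('k) U0) U1" for U1
    using lq.tangent_minimizer_hessian_eq[OF that] by (simp add: W)
  have W_pd: "sym_pd_op W" and W_inj: "inj W"
    using lq.sym_pd_op_hessian sym_pd_op_inj by (simp_all add: W)
  have "\<forall>U1. lq.tangent_minimizer (F U0) U0 (Fd CARD('k) U0) U1 \<longrightarrow> U1 = Ut"
    using hessian_step[OF Ut_tangent_min] hessian_step W_inj by (metis diff_add_cancel injD)
  moreover have "GDERIV Jd U0 :> ?g"
    unfolding Jd by (rule lq.has_gradient_cost[OF DF DFN])
  moreover have "W (- (Ut - U0)) = ?g"
    using hessian_step[OF Ut_tangent_min] W_pd linear_neg[of W "Ut - U0"]
    by (simp add: sym_pd_op_def)
  then have "Ut - U0 = - inv W ?g"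
    using W_inj by (metis inv_f_f minus_minus)
  ultimately show ?thesis
    unfolding lq.cost_def[symmetric] lq.tangent_minimizer_def[symmetric]
    using W_pd sym_pd_op_descent[OF W_pd hessian_step[OF Ut_tangent_min]] by blast
qed

end
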